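(* Let $P$ be a rectangular box (brick) in $\mathbb{R}^3$ of volume $1$, all of whose edge lengths are at least $\frac{1}{\sqrt{2}}$. Let $e_1,e_2,e_3$ be three pairwise skew edges of $P$, and let $A\in e_1$, $B\in e_2$, $C\in e_3$ be the vertices of a regular (equilateral) triangle. Then the side length of the triangle $ABC$ is at most $\sqrt{2}$.
   Context: A brick is a rectangular parallelepiped (box with pairwise orthogonal edge directions). Edges of the brick are its twelve closed edge segments. Three edges are pairwise skew if no two of them are parallel and no two intersect; in a brick such a triple consists of one edge from each of the three edge directions. "The vertices of a triangle lie on the skew edges of the brick" means each vertex lies on a different edge of such a triple. *)

theory Defs
  imports "HOL-Analysis.Analysis"
begin

text \<open>A brick in R^3 is given by a vertex P0 and three pairwise orthogonal edge vectors
u, v, w; its points are P0 + s u + t v + r w with s, t, r in [0,1].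
Edges parallel to v resp. w are obtained by cyclically permuting u, v, w.\<close>

definition brick_edge :: "real^3 \<Rightarrow> real^3 \<Rightarrow> real^3 \<Rightarrow> real^3 \<Rightarrow> real \<Rightarrow> real \<Rightarrow> (real^3) set" where
  "brick_edge P0 u v w i j = closed_segment (P0 + i *\<^sub>R v + j *\<^sub>R w) (P0 + u + i *\<^sub>R v + j *\<^sub>R w)"

end

theory Submission
  imports Defs
begin

text \<open>Write \<open>X, Y, Z\<close> for the squared edge lengths and \<open>D\<close> for the squared side of the
triangle. Projecting the triangle onto a face of the brick, Heron's formula gives
\<open>4 Y Z K\<^sup>2 = 3 D\<^sup>2 - 2 D X S\<close>, where \<open>K\<close> is the doubled area of the projection measured in
the unit square and \<open>S\<close> is the sum of the squared \<open>u\<close>-components of the sides. Since the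
vertices lie in the brick, \<open>K\<^sup>2 \<le> 1\<close> and \<open>S \<le> 2\<close>, and with \<open>X Y Z = 1\<close> this yields
\<open>X (3 D\<^sup>2 - 4 X D) \<le> 4\<close>. As the edges are skew, some side crosses the brick in direction
\<open>u\<close>, so \<open>D \<ge> X\<close>. If \<open>D > 2\<close>, these two facts together with \<open>X \<ge> 1/2\<close> force \<open>X > 1\<close>;
by symmetry also \<open>Y, Z > 1\<close>, contradicting \<open>X Y Z = 1\<close>.\<close>

lemma sum_sq_le_2_if_sum_zero:
  fixes a b c :: real
  assumes "a + b + c = 0" "\<bar>a\<bar> \<le> 1" "\<bar>b\<bar> \<le> 1" "\<bar>c\<bar> \<le> 1"
  shows "a\<^sup>2 + b\<^sup>2 + c\<^sup>2 \<le> 2"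
proof -
  have pair: "x\<^sup>2 + y\<^sup>2 + z\<^sup>2 \<le> 2" if "x + y + z = 0" "0 \<le> x * y" "\<bar>z\<bar> \<le> 1" for x y z :: real
  proof -
    have "z\<^sup>2 \<le> 1" using that(3) by (simp add: abs_square_le_1)
    moreover have "z\<^sup>2 = (x + y)\<^sup>2" using that(1) by (simp add: eq_neg_iff_add_eq_0 [symmetric])
    moreover have "x\<^sup>2 + y\<^sup>2 \<le> (x + y)\<^sup>2" using that(2) by (simp add: power2_eq_square algebra_simps)
    ultimately show ?thesis by linarith
  qed
  \<comment> \<open>of three numbers with sum zero, two have the same sign\<close>
  have "0 \<le> a * b \<or> 0 \<le> b * c \<or> 0 \<le> c * a"
    using assms(1) by (auto simp: zero_le_mult_iff)
  moreover have "b + c + a = 0" "c + a + b = 0" using assms(1) by linarith+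
  ultimately show ?thesis
    using pair[of a b c] pair[of b c a] pair[of c a b] assms by linarith
qed

text \<open>A triangle in the unit square has doubled area at most 1; the proof only uses that its
sides \<open>(p, r)\<close>, \<open>(q, s)\<close>, \<open>-(p + q, r + s)\<close> have components in \<open>[-1, 1]\<close>.\<close>

lemma abs_det2_le_1:
  fixes p q r s :: real
  assumes "\<bar>p\<bar> \<le> 1" "\<bar>q\<bar> \<le> 1" "\<bar>p + q\<bar> \<le> 1" "\<bar>r\<bar> \<le> 1" "\<bar>s\<bar> \<le> 1" "\<bar>r + s\<bar> \<le> 1"
  shows "\<bar>p * s - r * q\<bar> \<le> 1"
proof -
  have ps: "\<bar>p * s\<bar> \<le> \<bar>p\<bar>" "\<bar>p * s\<bar> \<le> \<bar>s\<bar>" and rq: "\<bar>r * q\<bar> \<le> \<bar>q\<bar>" "\<bar>r * q\<bar> \<le> \<bar>r\<bar>"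
    using assms by (simp_all add: abs_mult mult_left_le mult_left_le_one_le)
  show ?thesis
  proof (cases "0 \<le> p * q \<or> 0 \<le> r * s")
    case True
    then have "\<bar>p\<bar> + \<bar>q\<bar> \<le> 1 \<or> \<bar>r\<bar> + \<bar>s\<bar> \<le> 1"
      using assms by (auto simp: zero_le_mult_iff)
    then show ?thesis using ps rq by linarith
  next
    case False
    then have "0 \<le> (p * q) * (r * s)" by (simp add: mult_nonpos_nonpos)
    then have "0 \<le> (p * s) * (r * q)" by (simp add: ac_simps)
    moreover have "\<bar>x - y\<bar> \<le> 1" if "0 \<le> x * y" "\<bar>x\<bar> \<le> 1" "\<bar>y\<bar> \<le> 1" for x y :: real
      using that by (auto simp: zero_le_mult_iff)
    ultimately show ?thesis using ps rq assms by force
  qed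
qed

text \<open>Heron's formula for the projection of a triangle with sides \<open>(a\<^sub>k, b\<^sub>k, c\<^sub>k)\<close> onto the
\<open>bc\<close>-plane: its squared sides are \<open>D - X a\<^sub>k\<^sup>2\<close>, and the terms quartic in the \<open>a\<^sub>k\<close> cancel
because \<open>a\<^sub>1 + a\<^sub>2 + a\<^sub>3 = 0\<close>.\<close>

lemma equilateral_projected_area:
  fixes X Y Z D a1 a2 a3 b1 b2 b3 c1 c2 c3 :: real
  assumes "a1 + a2 + a3 = 0" "b1 + b2 + b3 = 0" "c1 + c2 + c3 = 0"
    and "D = X * a1\<^sup>2 + Y * b1\<^sup>2 + Z * c1\<^sup>2" "D = X * a2\<^sup>2 + Y * b2\<^sup>2 + Z * c2\<^sup>2"
      "D = X * a3\<^sup>2 + Y * b3\<^sup>2 + Z * c3\<^sup>2"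
  shows "4 * Y * Z * (b1 * c2 - c1 * b2)\<^sup>2 = 3 * D\<^sup>2 - 2 * D * X * (a1\<^sup>2 + a2\<^sup>2 + a3\<^sup>2)"
  using assms by algebra

lemma equilateral_in_unit_cube_weight_bound:
  fixes X Y Z D xa ya za xb yb zb xc yc zc :: real
  assumes weights: "0 \<le> X" "0 \<le> Y" "0 \<le> Z" "X * Y * Z = 1"
    and cube: "{xa, ya, za, xb, yb, zb, xc, yc, zc} \<subseteq> {0..1}"
    and sides: "D = X * (xa - xb)\<^sup>2 + Y * (ya - yb)\<^sup>2 + Z * (za - zb)\<^sup>2"
      "D = X * (xb - xc)\<^sup>2 + Y * (yb - yc)\<^sup>2 + Z * (zb - zc)\<^sup>2"
      "D = X * (xc - xa)\<^sup>2 + Y * (yc - ya)\<^sup>2 + Z * (zc - za)\<^sup>2"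
  shows "X * (3 * D\<^sup>2 - 4 * X * D) \<le> 4"
proof -
  define K where "K = (ya - yb) * (zb - zc) - (za - zb) * (yb - yc)"
  define S where "S = (xa - xb)\<^sup>2 + (xb - xc)\<^sup>2 + (xc - xa)\<^sup>2"
  have diff: "\<bar>p - q\<bar> \<le> 1" if "p \<in> {0..1}" "q \<in> {0..1}" for p q :: real
    using that by auto
  have "\<bar>K\<bar> \<le> 1"
    unfolding K_def using cube by (intro abs_det2_le_1) (auto intro: diff)
  then have K: "Y * Z * K\<^sup>2 \<le> Y * Z"
    using weights by (simp add: abs_square_le_1 mult_left_le)
  have S: "S \<le> 2"
    unfolding S_def using cube by (intro sum_sq_le_2_if_sum_zero) (auto intro: diff)
  have "D \<ge> 0" using sides(1) weights by simp
  then have "D * X * S \<le> D * X * 2" using S weights by (simp add: mult_left_mono)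
  moreover have "4 * Y * Z * K\<^sup>2 = 3 * D\<^sup>2 - 2 * D * X * S"
  proof -
    have "(p - q) + (q - r) + (r - p) = 0" for p q r :: real by simp
    from equilateral_projected_area[OF this this this sides] show ?thesis
      unfolding K_def S_def .
  qed
  ultimately have "3 * D\<^sup>2 - 4 * X * D \<le> 4 * Y * Z" using K by (simp add: algebra_simps)
  then have "X * (3 * D\<^sup>2 - 4 * X * D) \<le> X * (4 * Y * Z)" using weights by (simp add: mult_left_mono)
  then show ?thesis using weights(4) by (simp add: algebra_simps)
qed

lemma weight_gt_1_if_side_gt_2:
  fixes X D :: real
  assumes "1/2 \<le> X" "X \<le> D" "X * (3 * D\<^sup>2 - 4 * X * D) \<le> 4" "2 < D"
  shows "1 < X"
proof (rule ccontr)
  assume "\<not> 1 < X"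
  then have "(D - 2) * (3 * D + 6 - 4 * X) > 0" using assms by (intro mult_pos_pos) auto
  then have "3 * D\<^sup>2 - 4 * X * D > 12 - 8 * X" by (simp add: algebra_simps power2_eq_square)
  then have "X * (3 * D\<^sup>2 - 4 * X * D) > X * (12 - 8 * X)"
    using assms by (intro mult_strict_left_mono) auto
  moreover have "(2 * X - 1) * (1 - X) \<ge> 0" using assms \<open>\<not> 1 < X\<close> by simp
  then have "X * (12 - 8 * X) \<ge> 4" by (simp add: algebra_simps)
  ultimately show False using assms by linarith
qed

lemma equilateral_in_unit_cube_side_le_2:
  fixes X Y Z D xa ya za xb yb zb xc yc zc :: real
  assumes weights: "1/2 \<le> X" "1/2 \<le> Y" "1/2 \<le> Z" "X * Y * Z = 1"
    and cube: "{xa, ya, za, xb, yb, zb, xc, yc, zc} \<subseteq> {0..1}"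
    and sides: "D = X * (xa - xb)\<^sup>2 + Y * (ya - yb)\<^sup>2 + Z * (za - zb)\<^sup>2"
      "D = X * (xb - xc)\<^sup>2 + Y * (yb - yc)\<^sup>2 + Z * (zb - zc)\<^sup>2"
      "D = X * (xc - xa)\<^sup>2 + Y * (yc - ya)\<^sup>2 + Z * (zc - za)\<^sup>2"
    and crossing: "X \<le> D" "Y \<le> D" "Z \<le> D"
  shows "D \<le> 2"
proof (rule ccontr)
  assume "\<not> D \<le> 2"
  then have D: "2 < D" by simp
  have "X * (3 * D\<^sup>2 - 4 * X * D) \<le> 4"
    using weights by (intro equilateral_in_unit_cube_weight_bound[OF _ _ _ _ cube sides]) auto
  with weights crossing D have "1 < X" by (intro weight_gt_1_if_side_gt_2)
  have "Y * (3 * D\<^sup>2 - 4 * Y * D) \<le> 4"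
    using weights cube sides
    by (intro equilateral_in_unit_cube_weight_bound[of Y Z X ya za xa yb zb xb yc zc xc]) (auto simp: ac_simps)
  with weights crossing D have "1 < Y" by (intro weight_gt_1_if_side_gt_2)
  have "Z * (3 * D\<^sup>2 - 4 * Z * D) \<le> 4"
    using weights cube sides
    by (intro equilateral_in_unit_cube_weight_bound[of Z X Y za xa ya zb xb yb zc xc yc]) (auto simp: ac_simps)
  with weights crossing D have "1 < Z" by (intro weight_gt_1_if_side_gt_2)
  have "1 < X * Y * Z"
    using \<open>1 < X\<close> \<open>1 < Y\<close> \<open>1 < Z\<close> by (simp add: less_1_mult)
  with weights show False by simp
qed

lemma mem_brick_edge_iff:
  "x \<in> brick_edge P0 u v w i j \<longleftrightarrow> (\<exists>s\<in>{0..1}. x = P0 + s *\<^sub>R u + i *\<^sub>R v + j *\<^sub>R w)"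
  unfolding brick_edge_def closed_segment_def by (auto simp: algebra_simps)

lemma brick_edges_disjoint_offset_ne:
  assumes "brick_edge P0 u v w i j \<inter> brick_edge P0 v w u i' j' = {}" "i \<in> {0..1}" "j' \<in> {0..1}"
  shows "j \<noteq> i'"
proof
  assume "j = i'"
  then have "P0 + j' *\<^sub>R u + i *\<^sub>R v + j *\<^sub>R w \<in> brick_edge P0 v w u i' j'"
    using assms(2) unfolding mem_brick_edge_iff by (intro bexI[of _ i]) (auto simp: algebra_simps)
  moreover have "P0 + j' *\<^sub>R u + i *\<^sub>R v + j *\<^sub>R w \<in> brick_edge P0 u v w i j"
    using assms(3) unfolding mem_brick_edge_iff by blast
  ultimately show False using assms(1) by blast
qed

lemma dist_sq_orthogonal_coords:
  fixes u v w :: "'a::real_inner"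
  assumes "u \<bullet> v = 0" "v \<bullet> w = 0" "w \<bullet> u = 0"
  shows "(dist (P0 + a1 *\<^sub>R u + a2 *\<^sub>R v + a3 *\<^sub>R w) (P0 + b1 *\<^sub>R u + b2 *\<^sub>R v + b3 *\<^sub>R w))\<^sup>2
    = (u \<bullet> u) * (a1 - b1)\<^sup>2 + (v \<bullet> v) * (a2 - b2)\<^sup>2 + (w \<bullet> w) * (a3 - b3)\<^sup>2"
proof -
  have "P0 + a1 *\<^sub>R u + a2 *\<^sub>R v + a3 *\<^sub>R w - (P0 + b1 *\<^sub>R u + b2 *\<^sub>R v + b3 *\<^sub>R w)
      = (a1 - b1) *\<^sub>R u + (a2 - b2) *\<^sub>R v + (a3 - b3) *\<^sub>R w"
    by (simp add: algebra_simps)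
  moreover have "v \<bullet> u = 0" "w \<bullet> v = 0" "u \<bullet> w = 0" using assms by (simp_all add: inner_commute)
  ultimately show ?thesis
    using assms unfolding dist_norm power2_norm_eq_inner
    by (simp add: inner_add_left inner_add_right power2_eq_square algebra_simps)
qed

theorem mainTheorem2:
  fixes P0 u v w A B C :: "real^3" and i1 j1 i2 j2 i3 j3 :: real
  assumes orth: "u \<bullet> v = 0" "v \<bullet> w = 0" "w \<bullet> u = 0"
    and vol: "norm u * norm v * norm w = 1"
    and len: "norm u \<ge> 1 / sqrt 2" "norm v \<ge> 1 / sqrt 2" "norm w \<ge> 1 / sqrt 2"
    and idx: "i1 \<in> {0,1}" "j1 \<in> {0,1}" "i2 \<in> {0,1}" "j2 \<in> {0,1}" "i3 \<in> {0,1}" "j3 \<in> {0,1}"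
    and skew: "brick_edge P0 u v w i1 j1 \<inter> brick_edge P0 v w u i2 j2 = {}"
              "brick_edge P0 v w u i2 j2 \<inter> brick_edge P0 w u v i3 j3 = {}"
              "brick_edge P0 w u v i3 j3 \<inter> brick_edge P0 u v w i1 j1 = {}"
    and verts: "A \<in> brick_edge P0 u v w i1 j1" "B \<in> brick_edge P0 v w u i2 j2"
               "C \<in> brick_edge P0 w u v i3 j3"
    and equi: "A \<noteq> B" "dist A B = dist B C" "dist B C = dist C A"
  shows "dist A B \<le> sqrt 2"
proof -
  have half: "1/2 \<le> x \<bullet> x" if "1 / sqrt 2 \<le> norm x" for x :: "real^3"
    using power_mono[OF that, of 2] by (simp add: power2_norm_eq_inner power_divide)
  have "(u \<bullet> u) * (v \<bullet> v) * (w \<bullet> w) = 1"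
    using arg_cong[OF vol, of power2] by (simp add: power_mult_distrib power2_norm_eq_inner)
  note weights = half[OF len(1)] half[OF len(2)] half[OF len(3)] this
  obtain s t r where st: "{s, t, r} \<subseteq> {0..1}" and coords: "A = P0 + s *\<^sub>R u + i1 *\<^sub>R v + j1 *\<^sub>R w"
    "B = P0 + j2 *\<^sub>R u + t *\<^sub>R v + i2 *\<^sub>R w" "C = P0 + i3 *\<^sub>R u + j3 *\<^sub>R v + r *\<^sub>R w"
    using verts unfolding mem_brick_edge_iff by (auto simp: algebra_simps)
  have cube: "{s, i1, j1, j2, t, i2, i3, j3, r} \<subseteq> {0..1}" using st idx by auto
  have "j1 \<noteq> i2" "j2 \<noteq> i3" "j3 \<noteq> i1"
    using skew[THEN brick_edges_disjoint_offset_ne] cube by auto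
  then have crosses: "(j1 - i2)\<^sup>2 = 1" "(j2 - i3)\<^sup>2 = 1" "(j3 - i1)\<^sup>2 = 1"
    using idx by auto
  define D where "D = (dist A B)\<^sup>2"
  have "D = (dist A B)\<^sup>2" "D = (dist B C)\<^sup>2" "D = (dist C A)\<^sup>2"
    using equi by (simp_all add: D_def)
  then have sides: "D = (u \<bullet> u) * (s - j2)\<^sup>2 + (v \<bullet> v) * (i1 - t)\<^sup>2 + (w \<bullet> w) * (j1 - i2)\<^sup>2"
    "D = (u \<bullet> u) * (j2 - i3)\<^sup>2 + (v \<bullet> v) * (t - j3)\<^sup>2 + (w \<bullet> w) * (i2 - r)\<^sup>2"
    "D = (u \<bullet> u) * (i3 - s)\<^sup>2 + (v \<bullet> v) * (j3 - i1)\<^sup>2 + (w \<bullet> w) * (r - j1)\<^sup>2"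
    unfolding coords dist_sq_orthogonal_coords[OF orth] .
  have sq: "0 \<le> (x \<bullet> x) * a\<^sup>2" for x :: "real^3" and a :: real by simp
  have "u \<bullet> u \<le> D" using sides(2) crosses(2) sq[of v "t - j3"] sq[of w "i2 - r"] by simp
  moreover have "v \<bullet> v \<le> D" using sides(3) crosses(3) sq[of u "i3 - s"] sq[of w "r - j1"] by simp
  moreover have "w \<bullet> w \<le> D" using sides(1) crosses(1) sq[of u "s - j2"] sq[of v "i1 - t"] by simp
  ultimately have "D \<le> 2"
    using equilateral_in_unit_cube_side_le_2[OF weights cube sides] by blast
  then show ?thesis unfolding D_def by (intro real_le_rsqrt)
qed

end
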